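(* Let $R$ be a Lucas rod set $[1^s,2^t]$ or $[\bar1^s,2^t]$. For each of the following pairs of positive integers $a<b$ there exist a finite rod set $Q$ and a rod set $S$ of shape $\langle a,b\rangle$ with $R\xrightarrow{Q}S$, and $S$ is unique up to equivalence: (1) $b=a+1$, for any $a\ge1$; (2) $b=a+2$, when $s=1$ or $a$ is even; (3) $a=kd$, $b=(k+1)d$, for any integers $d\ge3$ and $k\ge1$.
   Context: A rod is a triple $(r,c,\varepsilon)$ with $r$ a positive integer (length), $c$ a tag (color), $\varepsilon\in\{\pm1\}$ (sign); antirods have sign $-1$. A rod set is a set of rods with finitely many of each length. A Lucas rod set is $[1^s,2^t]$ ($s$ positive rods of length 1, $t$ positive rods of length 2) or $[\bar1^s,2^t]$ ($s$ antirods of length 1, $t$ positive rods of length 2), with $s,t$ relatively prime positive integers. $C(n,R)$ = (number of positive rods of length $n$) $-$ (number of antirods of length $n$); $R\equiv S$ means $C(n,R)=C(n,S)$ for all $n>0$. A rod set is finite if its reduced equivalent (no rod and antirod of the same length) is finite. The shape of $S$ is the set of lengths $n$ with $C(n,S)\ne0$; shape $\langle a,b\rangle$ means this set is $\{a,b\}$. Unions are disjoint unions; $\overline{Q}$ reverses all signs; $QR$ has one rod per pair $(q,r)\in Q\times R$ of length $\operatorname{len}q+\operatorname{len}r$ and sign $\operatorname{sign}q\operatorname{sign}r$. $R\xrightarrow{Q}S$ means $S\equiv R\cup\overline{Q}\cup QR$. *)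

theory Defs
  imports Main
begin

text \<open>A rod set is represented up to relabelling of colours by its counting data:
  the pair (p, m) where p n is the number of positive rods of length n and
  m n the number of antirods of length n.  Lengths are positive, so there are
  no rods of length 0.\<close>

type_synonym rodset = "(nat \<Rightarrow> nat) \<times> (nat \<Rightarrow> nat)"

definition pos :: "rodset \<Rightarrow> nat \<Rightarrow> nat" where "pos R = fst R"
definition neg :: "rodset \<Rightarrow> nat \<Rightarrow> nat" where "neg R = snd R"

definition is_rodset :: "rodset \<Rightarrow> bool" where
  "is_rodset R \<longleftrightarrow> pos R 0 = 0 \<and> neg R 0 = 0"

definition C :: "nat \<Rightarrow> rodset \<Rightarrow> int" where
  "C n R = int (pos R n) - int (neg R n)"

definition rod_equiv :: "rodset \<Rightarrow> rodset \<Rightarrow> bool" where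
  "rod_equiv R S \<longleftrightarrow> (\<forall>n>0. C n R = C n S)"

definition reduce :: "rodset \<Rightarrow> rodset" where
  "reduce R = ((\<lambda>n. pos R n - min (pos R n) (neg R n)),
               (\<lambda>n. neg R n - min (pos R n) (neg R n)))"

definition finite_rodset :: "rodset \<Rightarrow> bool" where
  "finite_rodset R \<longleftrightarrow> finite {n. pos (reduce R) n \<noteq> 0 \<or> neg (reduce R) n \<noteq> 0}"

definition shape :: "rodset \<Rightarrow> nat set" where
  "shape S = {n. n > 0 \<and> C n S \<noteq> 0}"

definition rod_union :: "rodset \<Rightarrow> rodset \<Rightarrow> rodset" where
  "rod_union Q R = ((\<lambda>n. pos Q n + pos R n), (\<lambda>n. neg Q n + neg R n))"

definition rod_bar :: "rodset \<Rightarrow> rodset" where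
  "rod_bar Q = (neg Q, pos Q)"

text \<open>Product: one rod per pair, length = sum of lengths, sign = product of signs.
  (Rods have positive length, so summing over i \<le> n covers all pairs.)\<close>
definition rod_prod :: "rodset \<Rightarrow> rodset \<Rightarrow> rodset" where
  "rod_prod Q R =
     ((\<lambda>n. \<Sum>i\<le>n. pos Q i * pos R (n - i) + neg Q i * neg R (n - i)),
      (\<lambda>n. \<Sum>i\<le>n. pos Q i * neg R (n - i) + neg Q i * pos R (n - i)))"

definition rod_step :: "rodset \<Rightarrow> rodset \<Rightarrow> rodset \<Rightarrow> bool" where
  "rod_step R Q S \<longleftrightarrow> rod_equiv S (rod_union (rod_union R (rod_bar Q)) (rod_prod Q R))"

definition lucas_pos :: "nat \<Rightarrow> nat \<Rightarrow> rodset" where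
  "lucas_pos s t = ((\<lambda>n. if n = 1 then s else if n = 2 then t else 0), (\<lambda>n. 0))"

definition lucas_neg :: "nat \<Rightarrow> nat \<Rightarrow> rodset" where
  "lucas_neg s t = ((\<lambda>n. if n = 2 then t else 0), (\<lambda>n. if n = 1 then s else 0))"

definition is_lucas :: "rodset \<Rightarrow> nat \<Rightarrow> nat \<Rightarrow> bool" where
  "is_lucas R s t \<longleftrightarrow> s > 0 \<and> t > 0 \<and> coprime s t \<and>
     (R = lucas_pos s t \<or> R = lucas_neg s t)"

end

(* In generating functions, R --Q--> S says 1 - S(x) = (1 - R(x)) (1 + Q(x)).  For a Lucas rod
   set, 1 - R(x) = 1 - p x - q x^2 with p = +-s and q = t, and the coefficients of its inverse are
   the Lucas numbers U_(n+1).  For S = alpha x^a + beta x^b the coefficients of (1 - S)/(1 - R)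
   are U_(n+1) - alpha U_(n+1-a) - beta U_(n+1-b).  Beyond degree b they obey the homogeneous
   Lucas recurrence, so (as q /= 0) they vanish eventually, i.e. Q is finite, iff they vanish in
   degrees b - 1 and b.  This forces alpha U_(b-a) = U_b and beta = U_(b+1) - alpha U_(b-a+1),
   whence uniqueness; existence amounts to U_(b-a) dividing U_b, which holds in the listed cases
   because either (b - a) divides b and U_d divides U_(kd), or b - a = 2 and U_2 = p = +-1.
   Finally alpha /= 0 as U_n /= 0 for n > 0, and beta /= 0 by d'Ocagne's identity. *)

theory Submission
  imports Defs
begin

fun lucas_U :: "'a::comm_ring_1 \<Rightarrow> 'a \<Rightarrow> nat \<Rightarrow> 'a" where
  "lucas_U p q 0 = 0"
| "lucas_U p q (Suc 0) = 1"
| "lucas_U p q (Suc (Suc n)) = p * lucas_U p q (Suc n) + q * lucas_U p q n"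

lemma lucas_U_add:
  "lucas_U p q (Suc (m + n))
     = lucas_U p q (Suc m) * lucas_U p q (Suc n) + q * lucas_U p q m * lucas_U p q n"
proof (induction p q m rule: lucas_U.induct)
  case (3 p q m)
  have "lucas_U p q (Suc (Suc (Suc m) + n))
      = p * lucas_U p q (Suc (Suc m + n)) + q * lucas_U p q (Suc (m + n))"
    by simp
  also have "\<dots> = (p * lucas_U p q (Suc (Suc m)) + q * lucas_U p q (Suc m)) * lucas_U p q (Suc n)
      + q * (p * lucas_U p q (Suc m) + q * lucas_U p q m) * lucas_U p q n"
    by (simp only: 3) (simp add: algebra_simps del: lucas_U.simps)
  finally show ?case by simp
qed simp_all

lemma lucas_U_dvd:
  assumes "d dvd n"
  shows "lucas_U p q d dvd lucas_U p q n"
proof -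
  obtain j where n: "n = j * d" using assms by (metis dvdE mult.commute)
  have "lucas_U p q d dvd lucas_U p q (j * d)"
  proof (induction j)
    case (Suc j)
    show ?case
    proof (cases d)
      case (Suc e)
      have "Suc j * d = Suc (j * d + e)"
        using Suc by simp
      then have "lucas_U p q (Suc j * d) = lucas_U p q (Suc (j * d + e))"
        by (simp only:)
      also have "\<dots> = lucas_U p q (Suc (j * d)) * lucas_U p q d
          + q * lucas_U p q (j * d) * lucas_U p q e"
        using Suc by (simp only: lucas_U_add)
      finally show ?thesis
        using Suc.IH by simp
    qed simp
  qed simp
  then show ?thesis
    using n by simp
qed

lemma lucas_U_d_ocagne:
  "lucas_U p q (Suc (m + a)) * lucas_U p q m - lucas_U p q (m + a) * lucas_U p q (Suc m)
     = - ((- q) ^ m * lucas_U p q a)"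
proof (induction m)
  case (Suc m)
  have "lucas_U p q (Suc (Suc m + a)) * lucas_U p q (Suc m)
        - lucas_U p q (Suc m + a) * lucas_U p q (Suc (Suc m))
     = - q * (lucas_U p q (Suc (m + a)) * lucas_U p q m - lucas_U p q (m + a) * lucas_U p q (Suc m))"
    by (simp add: algebra_simps)
  then show ?case
    using Suc.IH by simp
qed simp

lemma lucas_U_pos:
  fixes p q :: "'a::linordered_idom"
  assumes "0 < p" "0 \<le> q"
  shows "0 < lucas_U p q (Suc n)"
proof -
  have "0 \<le> lucas_U p q n \<and> 0 < lucas_U p q (Suc n)"
    by (induction n) (use assms in \<open>auto intro: add_pos_nonneg\<close>)
  then show ?thesis ..
qed

lemma lucas_U_uminus: "lucas_U (- p) q n = (- 1) ^ Suc n * lucas_U p q n"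
  by (induction p q n rule: lucas_U.induct) (simp_all add: algebra_simps)

lemma lucas_U_nonzero:
  fixes p q :: "'a::linordered_idom"
  assumes "p \<noteq> 0" "0 \<le> q" "0 < n"
  shows "lucas_U p q n \<noteq> 0"
proof -
  obtain k where n: "n = Suc k" using assms(3) gr0_implies_Suc by blast
  show ?thesis
  proof (cases "0 < p")
    case True
    then show ?thesis using lucas_U_pos[OF True assms(2), of k] n by simp
  next
    case False
    then have "0 < lucas_U (- p) q n" using lucas_U_pos[of "- p" q] assms n by simp
    then show ?thesis by (auto simp: lucas_U_uminus)
  qed
qed

definition delayed_lucas_U :: "'a::comm_ring_1 \<Rightarrow> 'a \<Rightarrow> nat \<Rightarrow> nat \<Rightarrow> 'a" where
  "delayed_lucas_U p q a n = (if a \<le> n then lucas_U p q (n - a) else 0)"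

lemma delayed_lucas_U_rec:
  "delayed_lucas_U p q a (Suc (Suc k))
     = p * delayed_lucas_U p q a (Suc k) + q * delayed_lucas_U p q a k + (if Suc k = a then 1 else 0)"
proof (cases "a \<le> k")
  case True
  then have "Suc (Suc k) - a = Suc (Suc (k - a))" "Suc k - a = Suc (k - a)"
    by auto
  with True show ?thesis
    by (simp add: delayed_lucas_U_def)
qed (auto simp: delayed_lucas_U_def)

lemma linear_rec2_unique:
  fixes x y :: "nat \<Rightarrow> 'a::comm_ring_1"
  assumes "x 0 = y 0" "x 1 = y 1"
    and "\<And>k. x (Suc (Suc k)) = p * x (Suc k) + q * x k + f k"
    and "\<And>k. y (Suc (Suc k)) = p * y (Suc k) + q * y k + f k"
  shows "x = y"
proof
  fix n
  have "x n = y n \<and> x (Suc n) = y (Suc n)"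
    by (induction n) (simp_all add: assms[unfolded One_nat_def])
  then show "x n = y n" ..
qed

lemma linear_rec2_eventually_zero_iff:
  fixes x :: "nat \<Rightarrow> 'a::idom"
  assumes "q \<noteq> 0"
    and rec: "\<And>k. b \<le> k \<Longrightarrow> x (Suc (Suc k)) = p * x (Suc k) + q * x k"
  shows "(\<forall>\<^sub>F n in sequentially. x n = 0) \<longleftrightarrow> x b = 0 \<and> x (Suc b) = 0"
proof
  assume "\<forall>\<^sub>F n in sequentially. x n = 0"
  then obtain N where N: "\<And>n. N \<le> n \<Longrightarrow> x n = 0"
    by (auto simp: eventually_sequentially)
  have "x (b + j) = 0 \<and> x (Suc (b + j)) = 0" if "j \<le> N" for j
    using that
  proof (induction j rule: inc_induct)
    case base
    then show ?case using N by simp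
  next
    case (step j)
    have "x (Suc (b + j)) = 0" "x (Suc (Suc (b + j))) = 0"
      using step.IH by simp_all
    moreover have "x (Suc (Suc (b + j))) = p * x (Suc (b + j)) + q * x (b + j)"
      by (rule rec) simp
    ultimately have "q * x (b + j) = 0"
      by (metis add_0 mult_zero_right)
    with \<open>q \<noteq> 0\<close> have "x (b + j) = 0"
      by simp
    with step show ?case by simp
  qed
  from this[of 0] show "x b = 0 \<and> x (Suc b) = 0" by simp
next
  assume "x b = 0 \<and> x (Suc b) = 0"
  then have "x (b + j) = 0 \<and> x (Suc (b + j)) = 0" for j
    by (induction j) (simp_all add: rec)
  then show "\<forall>\<^sub>F n in sequentially. x n = 0"
    by (intro eventually_sequentiallyI[of b]) (auto dest!: le_Suc_ex)
qed

lemma C_rod_union [simp]: "C n (rod_union Q R) = C n Q + C n R"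
  by (simp add: C_def rod_union_def pos_def neg_def)

lemma C_rod_bar [simp]: "C n (rod_bar Q) = - C n Q"
  by (simp add: C_def rod_bar_def pos_def neg_def)

lemma C_rod_prod [simp]: "C n (rod_prod Q R) = (\<Sum>i\<le>n. C i Q * C (n - i) R)"
  by (simp add: C_def rod_prod_def pos_def neg_def of_nat_sum sum_subtractf[symmetric] algebra_simps)

lemma finite_rodset_iff: "finite_rodset Q \<longleftrightarrow> (\<forall>\<^sub>F n in sequentially. C n Q = 0)"
proof -
  have "{n. pos (reduce Q) n \<noteq> 0 \<or> neg (reduce Q) n \<noteq> 0} = {n. C n Q \<noteq> 0}"
    by (auto simp: reduce_def C_def pos_def neg_def)
  then show ?thesis
    by (simp add: finite_rodset_def eventually_cofinite flip: cofinite_eq_sequentially)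
qed

definition rodset_of :: "(nat \<Rightarrow> int) \<Rightarrow> rodset" where
  "rodset_of c = ((\<lambda>n. nat (c n)), (\<lambda>n. nat (- c n)))"

lemma C_rodset_of [simp]: "C n (rodset_of c) = c n"
  by (simp add: rodset_of_def C_def pos_def neg_def)

lemma is_rodset_rodset_of [simp]: "is_rodset (rodset_of c) \<longleftrightarrow> c 0 = 0"
  by (auto simp: rodset_of_def is_rodset_def pos_def neg_def)

definition lucas_counts :: "int \<Rightarrow> int \<Rightarrow> nat \<Rightarrow> int" where
  "lucas_counts p q n = (if n = 1 then p else if n = 2 then q else 0)"

lemma is_lucas_counts:
  assumes "is_lucas R s t"
  obtains p where "\<bar>p\<bar> = int s" "\<And>n. C n R = lucas_counts p (int t) n"
proof (cases "R = lucas_pos s t")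
  case True
  then show ?thesis
    by (intro that[of "int s"]) (auto simp: C_def lucas_pos_def pos_def neg_def lucas_counts_def)
next
  case False
  then have "R = lucas_neg s t"
    using assms by (simp add: is_lucas_def)
  then show ?thesis
    by (intro that[of "- int s"]) (auto simp: C_def lucas_neg_def pos_def neg_def lucas_counts_def)
qed

lemma sum_mult_lucas_counts:
  "(\<Sum>i\<le>n. c i * lucas_counts p q (n - i))
     = (if 1 \<le> n then p * c (n - 1) else 0) + (if 2 \<le> n then q * c (n - 2) else 0)"
proof -
  have "c i * lucas_counts p q (n - i)
      = (if i = n - 1 then (if 1 \<le> n then p else 0) * c i else 0)
        + (if i = n - 2 then (if 2 \<le> n then q else 0) * c i else 0)"
    if "i \<le> n" for i
    using that by (auto simp: lucas_counts_def)
  then have "(\<Sum>i\<le>n. c i * lucas_counts p q (n - i))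
      = (\<Sum>i\<le>n. (if i = n - 1 then (if 1 \<le> n then p else 0) * c i else 0)
        + (if i = n - 2 then (if 2 \<le> n then q else 0) * c i else 0))"
    by (intro sum.cong) auto
  then show ?thesis
    by (simp only: sum.distrib sum.delta) simp
qed

(* one_plus_coeffs Q (n + 1) is the coefficient of x^n in 1 + Q(x); the offset aligns 1 + Q with
   the Lucas sequence, which starts U 0 = 0, U 1 = 1. *)
definition one_plus_coeffs :: "rodset \<Rightarrow> nat \<Rightarrow> int" where
  "one_plus_coeffs Q n = (if n = 0 then 0 else if n = 1 then 1 else C (n - 1) Q)"

lemma rod_step_lucas_iff:
  assumes R: "\<And>n. C n R = lucas_counts p q n" and "is_rodset Q"
  shows "rod_step R Q S \<longleftrightarrow> (\<forall>k. one_plus_coeffs Q (Suc (Suc k))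
           = p * one_plus_coeffs Q (Suc k) + q * one_plus_coeffs Q k - C (Suc k) S)"
proof -
  define w where "w = one_plus_coeffs Q"
  define X where "X = rod_union (rod_union R (rod_bar Q)) (rod_prod Q R)"
  have "C 0 Q = 0"
    using \<open>is_rodset Q\<close> by (simp add: is_rodset_def C_def)
  moreover have "C n (rod_prod Q R)
      = (if 1 \<le> n then p * C (n - 1) Q else 0) + (if 2 \<le> n then q * C (n - 2) Q else 0)" for n
    by (simp only: C_rod_prod R sum_mult_lucas_counts)
  ultimately have X: "C (Suc k) X = p * w (Suc k) + q * w k - w (Suc (Suc k))" for k
    unfolding X_def w_def
    by (cases "k = 0 \<or> k = 1") (auto simp: R one_plus_coeffs_def lucas_counts_def simp del: C_rod_prod)
  have "rod_step R Q S \<longleftrightarrow> (\<forall>k. C (Suc k) S = C (Suc k) X)"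
    unfolding rod_step_def rod_equiv_def X_def by (metis gr0_conv_Suc zero_less_Suc)
  also have "\<dots> \<longleftrightarrow> (\<forall>k. w (Suc (Suc k)) = p * w (Suc k) + q * w k - C (Suc k) S)"
    by (auto simp: X)
  finally show ?thesis
    unfolding w_def .
qed

lemma eventually_one_plus_coeffs_zero_iff:
  "(\<forall>\<^sub>F n in sequentially. one_plus_coeffs Q n = 0) \<longleftrightarrow> finite_rodset Q"
proof -
  have "(\<forall>\<^sub>F n in sequentially. one_plus_coeffs Q n = 0)
      \<longleftrightarrow> (\<forall>\<^sub>F n in sequentially. one_plus_coeffs Q (Suc (Suc n)) = 0)"
    using eventually_sequentially_Suc[of "\<lambda>n. one_plus_coeffs Q (Suc n) = 0"]
      eventually_sequentially_Suc[of "\<lambda>n. one_plus_coeffs Q n = 0"] by simp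
  also have "\<dots> \<longleftrightarrow> (\<forall>\<^sub>F n in sequentially. C (Suc n) Q = 0)"
    by (simp add: one_plus_coeffs_def)
  also have "\<dots> \<longleftrightarrow> (\<forall>\<^sub>F n in sequentially. C n Q = 0)"
    by (rule eventually_sequentially_Suc[of "\<lambda>n. C n Q = 0"])
  finally show ?thesis
    by (simp add: finite_rodset_iff)
qed

lemma lucas_step_two_point_iff:
  assumes R: "\<And>n. C n R = lucas_counts p q n" and "q \<noteq> 0"
    and "0 < a" "a < b" and "shape S \<subseteq> {a, b}"
  shows "(\<exists>Q. is_rodset Q \<and> finite_rodset Q \<and> rod_step R Q S) \<longleftrightarrow>
         C a S * lucas_U p q (b - a) = lucas_U p q b
         \<and> C b S = lucas_U p q (Suc b) - C a S * lucas_U p q (Suc (b - a))"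
    (is "_ \<longleftrightarrow> ?coeffs")
proof -
  (* the coefficients of (1 - S)/(1 - R), with the offset of one_plus_coeffs *)
  define w where "w n = lucas_U p q n - C a S * delayed_lucas_U p q a n - C b S * delayed_lucas_U p q b n"
    for n
  have forcing: "C (Suc k) S = (if Suc k = a then C a S else 0) + (if Suc k = b then C b S else 0)" for k
    using assms(4,5) by (auto simp: shape_def)
  have w_rec: "w (Suc (Suc k)) = p * w (Suc k) + q * w k + - C (Suc k) S" for k
    unfolding w_def forcing delayed_lucas_U_rec by (simp add: algebra_simps)
  have w_init: "w 0 = 0" "w 1 = 1"
    using assms(3,4) by (simp_all add: w_def delayed_lucas_U_def)
  have "(\<forall>\<^sub>F n in sequentially. w n = 0) \<longleftrightarrow> w b = 0 \<and> w (Suc b) = 0"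
    using \<open>q \<noteq> 0\<close>
    by (rule linear_rec2_eventually_zero_iff[where p = p]) (use assms(4) in \<open>simp add: w_rec forcing\<close>)
  also have "\<dots> \<longleftrightarrow> ?coeffs"
    using assms(4) by (auto simp: w_def delayed_lucas_U_def Suc_diff_le)
  finally have w_eventually_zero: "(\<forall>\<^sub>F n in sequentially. w n = 0) \<longleftrightarrow> ?coeffs" .
  have coeffs_eq: "one_plus_coeffs Q = w" if "is_rodset Q" "rod_step R Q S" for Q
    using w_init w_rec that rod_step_lucas_iff[OF R \<open>is_rodset Q\<close>]
    by (intro linear_rec2_unique[of _ _ p q "\<lambda>k. - C (Suc k) S"]) (simp_all add: one_plus_coeffs_def)
  show ?thesis
  proof
    assume "\<exists>Q. is_rodset Q \<and> finite_rodset Q \<and> rod_step R Q S"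
    then show ?coeffs
      using coeffs_eq w_eventually_zero eventually_one_plus_coeffs_zero_iff by blast
  next
    assume ?coeffs
    define Q where "Q = rodset_of (\<lambda>n. if n = 0 then 0 else w (Suc n))"
    have "is_rodset Q"
      by (simp add: Q_def)
    moreover have w_Q: "one_plus_coeffs Q = w"
      using w_init by (auto simp: Q_def one_plus_coeffs_def gr0_conv_Suc)
    moreover have "finite_rodset Q"
      using \<open>?coeffs\<close> w_eventually_zero eventually_one_plus_coeffs_zero_iff[of Q] w_Q by simp
    moreover have "rod_step R Q S"
      using rod_step_lucas_iff[OF R \<open>is_rodset Q\<close>] w_rec w_Q by simp
    ultimately show "\<exists>Q. is_rodset Q \<and> finite_rodset Q \<and> rod_step R Q S"
      by blast
  qed
qed

lemma lucas_U_succ_diff_nonzero: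
  fixes p q :: "'a::idom"
  assumes "lucas_U p q b = lucas_U p q (b - a) * \<alpha>" and "a < b"
    and "q \<noteq> 0" and "lucas_U p q a \<noteq> 0"
  shows "lucas_U p q (Suc b) - \<alpha> * lucas_U p q (Suc (b - a)) \<noteq> 0"
proof -
  obtain m where b: "b = m + a"
    using \<open>a < b\<close> by (metis less_imp_le le_add_diff_inverse2)
  have "(lucas_U p q (Suc b) - \<alpha> * lucas_U p q (Suc m)) * lucas_U p q m
      = lucas_U p q (Suc (m + a)) * lucas_U p q m - lucas_U p q (m + a) * lucas_U p q (Suc m)"
    using assms(1) by (simp add: b algebra_simps)
  also have "\<dots> = - ((- q) ^ m * lucas_U p q a)"
    by (rule lucas_U_d_ocagne)
  also have "\<dots> \<noteq> 0"
    using assms(3,4) by simp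
  finally show ?thesis
    by (auto simp: b)
qed

lemma lucas_two_point_step_exists_unique:
  assumes R: "\<And>n. C n R = lucas_counts p q n" and "p \<noteq> 0" "0 < q"
    and "0 < a" "a < b" and "lucas_U p q (b - a) dvd lucas_U p q b"
  shows "\<exists>Q S. is_rodset Q \<and> finite_rodset Q \<and> is_rodset S \<and> shape S = {a, b}
              \<and> rod_step R Q S
              \<and> (\<forall>Q' S'. is_rodset Q' \<and> finite_rodset Q' \<and> is_rodset S'
                        \<and> shape S' = {a, b} \<and> rod_step R Q' S' \<longrightarrow> rod_equiv S' S)"
proof -
  have U_nonzero: "lucas_U p q n \<noteq> 0" if "0 < n" for n
    using lucas_U_nonzero[of p q n] \<open>p \<noteq> 0\<close> \<open>0 < q\<close> that by simp
  obtain \<alpha> where \<alpha>: "lucas_U p q b = lucas_U p q (b - a) * \<alpha>"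
    using assms(6) by (elim dvdE)
  define \<beta> where "\<beta> = lucas_U p q (Suc b) - \<alpha> * lucas_U p q (Suc (b - a))"
  have "\<alpha> \<noteq> 0"
    using \<alpha> U_nonzero[of b] assms(4,5) by auto
  moreover have "\<beta> \<noteq> 0"
    unfolding \<beta>_def using \<alpha> assms(3-5) U_nonzero
    by (intro lucas_U_succ_diff_nonzero) simp_all
  ultimately have shape_S: "shape S = {a, b}"
    if "\<And>n. C n S = (if n = a then \<alpha> else if n = b then \<beta> else 0)" for S
    using that assms(4,5) by (auto simp: shape_def)
  have reachable_iff: "(\<exists>Q. is_rodset Q \<and> finite_rodset Q \<and> rod_step R Q S)
      \<longleftrightarrow> C a S = \<alpha> \<and> C b S = \<beta>" if "shape S = {a, b}" for S
    using lucas_step_two_point_iff[OF R _ assms(4,5)] that \<open>0 < q\<close> \<alpha> U_nonzero[of "b - a"] assms(5)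
    by (auto simp: \<beta>_def mult.commute)
  define S where "S = rodset_of (\<lambda>n. if n = a then \<alpha> else if n = b then \<beta> else 0)"
  have "is_rodset S" "shape S = {a, b}"
    using assms(4,5) by (simp_all add: S_def shape_S)
  moreover obtain Q where "is_rodset Q" "finite_rodset Q" "rod_step R Q S"
    using reachable_iff[OF \<open>shape S = {a, b}\<close>] assms(4,5) by (auto simp: S_def)
  moreover have "rod_equiv S' S" if "shape S' = {a, b}" "is_rodset Q'" "finite_rodset Q'" "rod_step R Q' S'"
    for Q' S'
  proof -
    have "C a S' = \<alpha>" "C b S' = \<beta>"
      using reachable_iff[OF \<open>shape S' = {a, b}\<close>] that by blast+
    moreover have "C n S' = 0" if "0 < n" "n \<noteq> a" "n \<noteq> b" for n
      using \<open>shape S' = {a, b}\<close> that by (auto simp: shape_def)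
    ultimately show ?thesis
      by (auto simp: rod_equiv_def S_def)
  qed
  ultimately show ?thesis
    by blast
qed

theorem mainTheorem18:
  fixes R :: rodset and s t a b :: nat
  assumes "is_lucas R s t"
    and "0 < a" and "a < b"
    and "b = a + 1
         \<or> (b = a + 2 \<and> (s = 1 \<or> even a))
         \<or> (\<exists>d k. d \<ge> 3 \<and> k \<ge> 1 \<and> a = k * d \<and> b = (k + 1) * d)"
  shows "\<exists>Q S. is_rodset Q \<and> finite_rodset Q \<and> is_rodset S \<and> shape S = {a, b}
              \<and> rod_step R Q S
              \<and> (\<forall>Q' S'. is_rodset Q' \<and> finite_rodset Q' \<and> is_rodset S'
                        \<and> shape S' = {a, b} \<and> rod_step R Q' S' \<longrightarrow> rod_equiv S' S)"
proof -
  obtain p where p: "\<bar>p\<bar> = int s" and R: "\<And>n. C n R = lucas_counts p (int t) n"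
    using is_lucas_counts[OF assms(1)] by blast
  have "0 < s" "0 < t"
    using assms(1) by (auto simp: is_lucas_def)
  have "(b - a) dvd b \<or> (b - a = 2 \<and> s = 1)"
    using assms(4) by (auto simp: add_mult_distrib)
  then have "lucas_U p (int t) (b - a) dvd lucas_U p (int t) b"
  proof
    assume "b - a = 2 \<and> s = 1"
    then have "is_unit (lucas_U p (int t) (b - a))"
      using p by (simp add: numeral_2_eq_2 zabs_def split: if_splits)
    then show ?thesis
      by (rule unit_imp_dvd)
  qed (rule lucas_U_dvd)
  then show ?thesis
    using lucas_two_point_step_exists_unique[OF R] \<open>0 < s\<close> \<open>0 < t\<close> p assms(2,3) by simp
qed

end
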